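(* Assume hypothesis (H), extend $g$ to a bounded $C^1$ function on $\mathbb{R}$, and assume $g'(K)\,h\,e^{h+1}<-1$. Then for all sufficiently small $\varepsilon>0$, every non-constant bounded solution $x:\mathbb{R}\to\mathbb{R}$ of $$\varepsilon^2x''(t)-x'(t)-x(t)+g(x(t-h))=0,\qquad t\in\mathbb{R},$$ with $x(+\infty)=K$ oscillates about $K$, i.e. for every $z\in\mathbb{R}$ the function $x-K$ takes both positive and negative values on $[z,+\infty)$.
   Context: Hypothesis (H): for $h>0$ and $g:\mathbb{R}_+\to\mathbb{R}_+$, the equation $u'(t)=-u(t)+g(u(t-h))$, $u\ge0$, has exactly two constant solutions $0$ and $K>0$; $K$ is exponentially asymptotically stable and $0$ is hyperbolic; $g\in C^1(\mathbb{R}_+,\mathbb{R}_+)$, $g$ is $C^2$ near $0$ and near $K$, and $p:=g'(0)>1$. *)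

theory Defs
  imports "HOL-Analysis.Analysis"
begin

definition dde_solution :: "(real \<Rightarrow> real) \<Rightarrow> real \<Rightarrow> (real \<Rightarrow> real) \<Rightarrow> bool" where
  "dde_solution g h u \<longleftrightarrow>
     continuous_on {-h..} u \<and> (\<forall>t\<ge>-h. u t \<ge> 0) \<and>
     (\<forall>t>0. (u has_real_derivative (- u t + g (u (t - h)))) (at t))"

definition exp_asymp_stable :: "(real \<Rightarrow> real) \<Rightarrow> real \<Rightarrow> real \<Rightarrow> bool" where
  "exp_asymp_stable g h K \<longleftrightarrow>
     (\<exists>\<delta>>0. \<exists>C \<gamma>. \<gamma> > 0 \<and>
       (\<forall>u. dde_solution g h u \<and> (\<forall>s\<in>{-h..0}. \<bar>u s - K\<bar> < \<delta>) \<longrightarrow>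
          (\<forall>t\<ge>0. \<bar>u t - K\<bar> \<le> C * exp (- \<gamma> * t) * (SUP s\<in>{-h..0}. \<bar>u s - K\<bar>))))"

text \<open>Hyperbolicity of the equilibrium 0: the characteristic equation of the
  linearization, lambda = -1 + g'(0) e^{-lambda h}, has no root on the imaginary axis.\<close>
definition hyperbolic_zero :: "(real \<Rightarrow> real) \<Rightarrow> real \<Rightarrow> bool" where
  "hyperbolic_zero g h \<longleftrightarrow>
     (\<forall>\<omega>::real. \<i> * of_real \<omega> \<noteq>
        -1 + of_real (deriv g 0) * exp (- (\<i> * of_real \<omega>) * of_real h))"

definition C2_near :: "(real \<Rightarrow> real) \<Rightarrow> real \<Rightarrow> bool" where
  "C2_near g c \<longleftrightarrow> (\<exists>\<delta>>0. \<exists>g2.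
     (\<forall>x\<in>{0..} \<inter> {c-\<delta><..<c+\<delta>}.
        (deriv g has_real_derivative g2 x) (at x within {0..} \<inter> {c-\<delta><..<c+\<delta>})) \<and>
     continuous_on ({0..} \<inter> {c-\<delta><..<c+\<delta>}) g2)"

text \<open>Hypothesis (H), for g already extended to a bounded C^1 function on the reals.\<close>
definition hypH :: "(real \<Rightarrow> real) \<Rightarrow> real \<Rightarrow> real \<Rightarrow> bool" where
  "hypH g h K \<longleftrightarrow>
     h > 0 \<and> K > 0 \<and>
     (\<forall>x\<ge>0. g x \<ge> 0) \<and>
     {c. c \<ge> 0 \<and> g c = c} = {0, K} \<and>
     exp_asymp_stable g h K \<and> hyperbolic_zero g h \<and>
     (\<forall>x. g differentiable at x) \<and> continuous_on UNIV (deriv g) \<and>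
     C2_near g 0 \<and> C2_near g K \<and> deriv g 0 > 1"

end

theory Submission
  imports Defs
begin

text \<open>If a solution \<open>x\<close> stayed on one side of \<open>K\<close>, then \<open>y = \<plusminus>(x - K) \<ge> 0\<close> would satisfy
  \<open>a y'' - y' = y + G\<close> with \<open>a = \<epsilon>\<^sup>2\<close> and \<open>\<beta> y (t - h) \<le> G t \<le> B y (t - h)\<close>, where
  \<open>-B < g' K < -\<beta>\<close> and \<open>\<beta> h e\<^sup>h\<^sup>+\<^sup>1 > 1\<close>. Boundedness forces \<open>y' \<le> 0\<close>, so either \<open>y\<close> vanishes
  eventually, and then \<open>x\<close> is constant by backward uniqueness, or \<open>y > 0\<close>. In the latter case
  \<open>W = y - a y'\<close> is comparable to \<open>y\<close>, and \<open>V = e\<^sup>\<kappa>\<^sup>t W\<close> satisfies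
  \<open>V' t \<le> - \<kappa> \<beta> e\<^sup>\<kappa>\<^sup>h V (t - h)\<close> with \<open>\<kappa> \<rightarrow> 1\<close> as \<open>a \<rightarrow> 0\<close>. For small \<open>\<epsilon>\<close> the coefficient
  exceeds \<open>1 / (h e)\<close>, and then such a delay inequality has no positive solution.\<close>

lemma DERIV_nonpos_imp_nonincreasing':
  fixes f f' :: "real \<Rightarrow> real"
  assumes "a \<le> b"
    and "\<And>t. a \<le> t \<Longrightarrow> t \<le> b \<Longrightarrow> (f has_real_derivative f' t) (at t)"
    and "\<And>t. a \<le> t \<Longrightarrow> t \<le> b \<Longrightarrow> f' t \<le> 0"
  shows "f b \<le> f a"
  using DERIV_nonpos_imp_nonincreasing[of a b f] assms by blast

lemma DERIV_nonneg_imp_nondecreasing':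
  fixes f f' :: "real \<Rightarrow> real"
  assumes "a \<le> b"
    and "\<And>t. a \<le> t \<Longrightarrow> t \<le> b \<Longrightarrow> (f has_real_derivative f' t) (at t)"
    and "\<And>t. a \<le> t \<Longrightarrow> t \<le> b \<Longrightarrow> 0 \<le> f' t"
  shows "f a \<le> f b"
  using DERIV_nonneg_imp_nondecreasing[of a b f] assms by blast

lemma DERIV_le_neg_const_imp_decrease:
  fixes f f' :: "real \<Rightarrow> real"
  assumes "0 \<le> w"
    and "\<And>s. t \<le> s \<Longrightarrow> s \<le> t + w \<Longrightarrow> (f has_real_derivative f' s) (at s)"
    and "\<And>s. t \<le> s \<Longrightarrow> s \<le> t + w \<Longrightarrow> f' s \<le> - c"
  shows "f (t + w) + c * w \<le> f t"
proof -
  have "(\<lambda>s. f s + c * s) (t + w) \<le> (\<lambda>s. f s + c * s) t"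
  proof (rule DERIV_nonpos_imp_nonincreasing'[where f = "\<lambda>s. f s + c * s" and f' = "\<lambda>s. f' s + c"])
    fix s assume "t \<le> s" "s \<le> t + w"
    then show "((\<lambda>s. f s + c * s) has_real_derivative f' s + c) (at s)"
      using assms(2) by (auto intro!: derivative_eq_intros)
    show "f' s + c \<le> 0"
      using assms(3) \<open>t \<le> s\<close> \<open>s \<le> t + w\<close> by fastforce
  qed (use assms in auto)
  then show ?thesis
    by (simp add: algebra_simps)
qed

lemma bounded_imp_not_deriv_ge_pos:
  fixes y y' :: "real \<Rightarrow> real"
  assumes c: "0 < c"
    and y': "\<And>r. s \<le> r \<Longrightarrow> c \<le> y' r"
    and dy: "\<And>r. s \<le> r \<Longrightarrow> (y has_real_derivative y' r) (at r)"
    and bounded: "\<And>t. s \<le> t \<Longrightarrow> \<bar>y t\<bar> \<le> M"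
  shows False
proof -
  define w where "w = (2 * M + 1) / c"
  have "0 \<le> M"
    using bounded[of s] by simp
  then have w: "0 \<le> w"
    using c by (simp add: w_def)
  have "y s + c * w \<le> y (s + w)"
    using DERIV_le_neg_const_imp_decrease[of w s "\<lambda>r. - y r" "\<lambda>r. - y' r" c] w dy y'
    by (force intro: DERIV_minus)
  moreover have "c * w = 2 * M + 1"
    using c by (simp add: w_def)
  ultimately show False
    using bounded[of s] bounded[of "s + w"] w by linarith
qed

definition decays_at_rate :: "(real \<Rightarrow> real) \<Rightarrow> real \<Rightarrow> real \<Rightarrow> bool" where
  "decays_at_rate V l S \<longleftrightarrow> (\<forall>t u. S \<le> t \<longrightarrow> t \<le> u \<longrightarrow> V u \<le> exp (- l * (u - t)) * V t)"

lemma decays_at_rate_imp_le: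
  assumes "decays_at_rate V l S" "S \<le> t" "0 \<le> d"
  shows "exp (l * d) * V (t + d) \<le> V t"
proof -
  have "V (t + d) \<le> exp (- (l * d)) * V t"
    using assms unfolding decays_at_rate_def by (metis add_diff_cancel_left' le_add_same_cancel1 mult_minus_left)
  then show ?thesis
    by (simp add: exp_minus field_simps)
qed

lemma decays_at_rate_mono:
  assumes "decays_at_rate V m S" "l \<le> m" "\<And>t. S \<le> t \<Longrightarrow> 0 \<le> V t"
  shows "decays_at_rate V l S"
  unfolding decays_at_rate_def
proof (intro allI impI)
  fix t u assume "S \<le> t" "t \<le> u"
  then have "V u \<le> exp (- m * (u - t)) * V t"
    using assms(1) unfolding decays_at_rate_def by blast
  also have "\<dots> \<le> exp (- l * (u - t)) * V t"
    using assms(2,3) \<open>S \<le> t\<close> \<open>t \<le> u\<close> by (intro mult_right_mono) (auto intro: mult_right_mono)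
  finally show "V u \<le> exp (- l * (u - t)) * V t" .
qed

lemma decays_at_rate_if_deriv_le:
  fixes V V' :: "real \<Rightarrow> real"
  assumes dV: "\<And>t. S \<le> t \<Longrightarrow> (V has_real_derivative V' t) (at t)"
    and V': "\<And>t. S \<le> t \<Longrightarrow> V' t \<le> - m * V t"
  shows "decays_at_rate V m S"
  unfolding decays_at_rate_def
proof (intro allI impI)
  fix t u assume "S \<le> t" "t \<le> u"
  have "exp (m * u) * V u \<le> exp (m * t) * V t"
  proof (rule DERIV_nonpos_imp_nonincreasing'[where f = "\<lambda>s. exp (m * s) * V s"
        and f' = "\<lambda>s. exp (m * s) * (V' s + m * V s)"])
    fix s assume "t \<le> s" "s \<le> u"
    then show "((\<lambda>s. exp (m * s) * V s) has_real_derivative exp (m * s) * (V' s + m * V s)) (at s)"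
      using dV[of s] \<open>S \<le> t\<close> by (auto intro!: derivative_eq_intros simp: algebra_simps)
    show "exp (m * s) * (V' s + m * V s) \<le> 0"
      using V'[of s] \<open>S \<le> t\<close> \<open>t \<le> s\<close> by (simp add: mult_nonneg_nonpos)
  qed fact
  moreover have "exp (- m * (u - t)) * V t = exp (m * t) * V t / exp (m * u)"
    by (simp add: algebra_simps exp_diff)
  ultimately show "V u \<le> exp (- m * (u - t)) * V t"
    by (simp add: pos_le_divide_eq mult.commute)
qed

lemma decays_at_rate_delay_step:
  fixes V V' :: "real \<Rightarrow> real"
  assumes h: "0 < h" and p: "0 \<le> p"
    and dV: "\<And>t. S \<le> t \<Longrightarrow> (V has_real_derivative V' t) (at t)"
    and ineq: "\<And>t. S \<le> t \<Longrightarrow> V' t \<le> - p * V (t - h)"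
    and rate: "decays_at_rate V l S'" and "S \<le> S'"
  shows "decays_at_rate V (p * exp (l * h)) (S' + h)"
proof (rule decays_at_rate_if_deriv_le)
  fix t assume t: "S' + h \<le> t"
  then show "(V has_real_derivative V' t) (at t)"
    using dV \<open>S \<le> S'\<close> h by simp
  have "exp (l * h) * V t \<le> V (t - h)"
    using decays_at_rate_imp_le[OF rate, of "t - h" h] t h by simp
  then have "p * (exp (l * h) * V t) \<le> p * V (t - h)"
    using p by (rule mult_left_mono)
  then show "V' t \<le> - (p * exp (l * h)) * V t"
    using ineq[of t] t \<open>S \<le> S'\<close> h by simp
qed

lemma exp_one_mult_le_exp:
  fixes x :: real
  shows "exp 1 * x \<le> exp x"
proof -
  have "x \<le> exp (x - 1)"
    using exp_ge_add_one_self[of "x - 1"] by simp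
  then show ?thesis
    by (simp add: exp_diff pos_le_divide_eq mult.commute)
qed

lemma delay_inequality_antimono:
  fixes V V' :: "real \<Rightarrow> real"
  assumes "0 \<le> p"
    and dV: "\<And>t. S \<le> t \<Longrightarrow> (V has_real_derivative V' t) (at t)"
    and ineq: "\<And>t. S \<le> t \<Longrightarrow> V' t \<le> - p * V (t - h)"
    and pos: "\<And>t. S - h \<le> t \<Longrightarrow> 0 < V t"
  shows "decays_at_rate V 0 S"
proof (rule decays_at_rate_if_deriv_le[OF dV])
  fix t assume "S \<le> t"
  then have "0 \<le> p * V (t - h)"
    using pos[of "t - h"] assms(1) by simp
  then show "V' t \<le> - 0 * V t"
    using ineq[OF \<open>S \<le> t\<close>] by simp
qed

text \<open>Each delay step improves a decay rate \<open>l\<close> of \<open>V\<close> to \<open>p e\<^sup>l\<^sup>h \<ge> p h e l\<close>.\<close>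

lemma delay_inequality_decays_at_any_rate:
  fixes V V' :: "real \<Rightarrow> real"
  assumes h: "0 < h" and "0 < p" and Q: "1 < p * h * exp 1"
    and dV: "\<And>t. S \<le> t \<Longrightarrow> (V has_real_derivative V' t) (at t)"
    and ineq: "\<And>t. S \<le> t \<Longrightarrow> V' t \<le> - p * V (t - h)"
    and pos: "\<And>t. S - h \<le> t \<Longrightarrow> 0 < V t"
  shows "\<exists>S'\<ge>S. decays_at_rate V L S'"
proof -
  define Q where "Q = p * h * exp 1"
  have p: "0 \<le> p"
    using \<open>0 < p\<close> by simp
  have nonneg: "0 \<le> V t" if "S \<le> t" for t
    using pos[of t] that h by simp
  have antimono: "decays_at_rate V 0 S"
    by (rule delay_inequality_antimono[OF p dV ineq pos])
  have rates: "\<exists>S'\<ge>S. decays_at_rate V (p * Q ^ n) S'" for n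
  proof (induction n)
    case 0
    show ?case
      using decays_at_rate_delay_step[OF h p dV ineq antimono order.refl] h
      by (intro exI[of _ "S + h"]) auto
  next
    case (Suc n)
    then obtain S' where "S \<le> S'" and rate: "decays_at_rate V (p * Q ^ n) S'"
      by blast
    have "p * Q ^ Suc n = p * (exp 1 * (p * Q ^ n * h))"
      by (simp add: Q_def algebra_simps)
    also have "\<dots> \<le> p * exp (p * Q ^ n * h)"
      using exp_one_mult_le_exp p by (rule mult_left_mono)
    finally have "p * Q ^ Suc n \<le> p * exp (p * Q ^ n * h)" .
    with decays_at_rate_delay_step[OF h p dV ineq rate \<open>S \<le> S'\<close>]
    have "decays_at_rate V (p * Q ^ Suc n) (S' + h)"
      by (rule decays_at_rate_mono) (use nonneg h \<open>S \<le> S'\<close> in auto)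
    then show ?case
      using \<open>S \<le> S'\<close> h by (intro exI[of _ "S' + h"]) auto
  qed
  obtain n where "L / p < Q ^ n"
    using real_arch_pow[of Q "L / p"] Q by (auto simp: Q_def)
  then have "L \<le> p * Q ^ n"
    using \<open>0 < p\<close> by (simp add: field_simps)
  then show ?thesis
    using rates[of n] nonneg by (meson decays_at_rate_mono order.trans)
qed

lemma delay_inequality_half_delay_bound:
  fixes V V' :: "real \<Rightarrow> real"
  assumes h: "0 < h" and p: "0 \<le> p"
    and dV: "\<And>t. S \<le> t \<Longrightarrow> (V has_real_derivative V' t) (at t)"
    and ineq: "\<And>t. S \<le> t \<Longrightarrow> V' t \<le> - p * V (t - h)"
    and pos: "\<And>t. S - h \<le> t \<Longrightarrow> 0 < V t"
    and t: "S + h \<le> t"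
  shows "p * (h / 2) * V (t - h / 2) < V t"
proof -
  have antimono: "decays_at_rate V 0 S"
    by (rule delay_inequality_antimono[OF p dV ineq pos])
  have "V (t + h / 2) + p * V (t - h / 2) * (h / 2) \<le> V t"
  proof (rule DERIV_le_neg_const_imp_decrease[where f' = V'])
    fix s assume s: "t \<le> s" "s \<le> t + h / 2"
    then show "(V has_real_derivative V' s) (at s)"
      using dV t h by simp
    have "V (t - h / 2) \<le> V (s - h)"
      using decays_at_rate_imp_le[OF antimono, of "s - h" "t - h / 2 - (s - h)"] s t by simp
    then have "p * V (t - h / 2) \<le> p * V (s - h)"
      using p by (rule mult_left_mono)
    moreover have "V' s \<le> - p * V (s - h)"
      using ineq[of s] s t h by simp
    ultimately show "V' s \<le> - (p * V (t - h / 2))"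
      by linarith
  qed (use h in simp)
  moreover have "0 < V (t + h / 2)"
    using pos t h by simp
  ultimately show ?thesis
    by (simp add: algebra_simps)
qed

text \<open>The classical oscillation criterion: the decay rates of a positive solution become
  arbitrarily large once \<open>p h e > 1\<close>, whereas integrating the inequality over half a delay
  bounds the decay of \<open>V\<close> over half a delay.\<close>

lemma delay_differential_inequality_positive_solution:
  fixes V V' :: "real \<Rightarrow> real"
  assumes h: "0 < h"
    and dV: "\<And>t. S \<le> t \<Longrightarrow> (V has_real_derivative V' t) (at t)"
    and ineq: "\<And>t. S \<le> t \<Longrightarrow> V' t \<le> - p * V (t - h)"
    and pos: "\<And>t. S - h \<le> t \<Longrightarrow> 0 < V t"
  shows "p * h * exp 1 \<le> 1"
proof (rule ccontr)
  assume "\<not> p * h * exp 1 \<le> 1"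
  then have Q: "1 < p * h * exp 1"
    by simp
  have p: "0 < p"
  proof (rule ccontr)
    assume "\<not> 0 < p"
    then have "p * (h * exp 1) \<le> 0"
      using h by (intro mult_nonpos_nonneg) auto
    with Q show False
      by (simp add: mult.assoc)
  qed
  define L where "L = 4 / (p * h\<^sup>2)"
  obtain S' where "S \<le> S'" and rate: "decays_at_rate V L S'"
    using delay_inequality_decays_at_any_rate[OF h p Q dV ineq pos] by blast
  define t where "t = S' + h"
  have t: "S + h \<le> t"
    using \<open>S \<le> S'\<close> by (simp add: t_def)
  have "L * (h / 2) \<le> exp (L * (h / 2))"
    using exp_ge_add_one_self[of "L * (h / 2)"] by linarith
  then have "L * (h / 2) * V t \<le> exp (L * (h / 2)) * V t"
    using pos[of t] \<open>S \<le> S'\<close> h by (intro mult_right_mono) (auto simp: t_def)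
  also have "\<dots> \<le> V (t - h / 2)"
    using decays_at_rate_imp_le[OF rate, of "t - h / 2" "h / 2"] h by (simp add: t_def add.commute)
  finally have "p * (h / 2) * (L * (h / 2) * V t) \<le> p * (h / 2) * V (t - h / 2)"
    using p h by (intro mult_left_mono) auto
  also have "\<dots> < V t"
    by (rule delay_inequality_half_delay_bound[where V = V and V' = V', OF h less_imp_le[OF p] dV ineq pos t])
  also have "V t = p * (h / 2) * (L * (h / 2) * V t)"
    using p h by (simp add: L_def field_simps power2_eq_square)
  finally show False
    by simp
qed

text \<open>For \<open>a y'' - y' = F\<close> the first integral \<open>e\<^sup>-\<^sup>r\<^sup>/\<^sup>a (y' r + c)\<close> has derivative
  \<open>e\<^sup>-\<^sup>r\<^sup>/\<^sup>a (F r - c) / a\<close>, so its monotonicity is governed by the sign of \<open>F - c\<close>.\<close>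

lemma first_integral_nondecreasing:
  fixes y' y'' :: "real \<Rightarrow> real"
  assumes a: "0 < a" and "s \<le> u"
    and dy': "\<And>r. s \<le> r \<Longrightarrow> r \<le> u \<Longrightarrow> (y' has_real_derivative y'' r) (at r)"
    and F: "\<And>r. s \<le> r \<Longrightarrow> r \<le> u \<Longrightarrow> c \<le> a * y'' r - y' r"
  shows "exp (- s / a) * (y' s + c) \<le> exp (- u / a) * (y' u + c)"
proof (rule DERIV_nonneg_imp_nondecreasing'[where f = "\<lambda>r. exp (- r / a) * (y' r + c)"
      and f' = "\<lambda>r. exp (- r / a) * (a * y'' r - y' r - c) / a"])
  fix r assume r: "s \<le> r" "r \<le> u"
  show "((\<lambda>r. exp (- r / a) * (y' r + c)) has_real_derivative
      exp (- r / a) * (a * y'' r - y' r - c) / a) (at r)"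
    using dy'[OF r] a by (auto intro!: derivative_eq_intros simp: field_simps)
  show "0 \<le> exp (- r / a) * (a * y'' r - y' r - c) / a"
    using F[OF r] a by simp
qed fact

lemma first_integral_nonincreasing:
  fixes y' y'' :: "real \<Rightarrow> real"
  assumes a: "0 < a" and "s \<le> u"
    and dy': "\<And>r. s \<le> r \<Longrightarrow> r \<le> u \<Longrightarrow> (y' has_real_derivative y'' r) (at r)"
    and F: "\<And>r. s \<le> r \<Longrightarrow> r \<le> u \<Longrightarrow> a * y'' r - y' r \<le> c"
  shows "exp (- u / a) * (y' u + c) \<le> exp (- s / a) * (y' s + c)"
  using first_integral_nondecreasing[of a s u "\<lambda>r. - y' r" "\<lambda>r. - y'' r" "- c"] assms
  by (auto intro: DERIV_minus simp: algebra_simps)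

lemma bounded_second_order_deriv_nonpos:
  fixes y y' y'' :: "real \<Rightarrow> real"
  assumes a: "0 < a" and "T \<le> s"
    and dy: "\<And>t. T \<le> t \<Longrightarrow> (y has_real_derivative y' t) (at t)"
    and dy': "\<And>t. T \<le> t \<Longrightarrow> (y' has_real_derivative y'' t) (at t)"
    and F: "\<And>t. T \<le> t \<Longrightarrow> 0 \<le> a * y'' t - y' t"
    and bounded: "\<And>t. T \<le> t \<Longrightarrow> \<bar>y t\<bar> \<le> M"
  shows "y' s \<le> 0"
proof (rule ccontr)
  assume "\<not> y' s \<le> 0"
  then have pos: "0 < y' s"
    by simp
  have "y' s \<le> y' r" if "s \<le> r" for r
  proof -
    have "exp (- r / a) \<le> exp (- s / a)"
      using a that by (simp add: divide_right_mono)
    then have "exp (- r / a) * y' s \<le> exp (- s / a) * y' s"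
      using pos by (simp add: mult_right_mono)
    also have "\<dots> \<le> exp (- r / a) * y' r"
      using first_integral_nondecreasing[OF a that, of y' y'' 0] \<open>T \<le> s\<close> dy' F by simp
    finally show ?thesis
      by simp
  qed
  with pos show False
    by (rule bounded_imp_not_deriv_ge_pos[where y = y and M = M]) (use \<open>T \<le> s\<close> dy bounded in auto)
qed

lemma bounded_second_order_deriv_lower:
  fixes y y' y'' :: "real \<Rightarrow> real"
  assumes a: "0 < a" and m: "0 \<le> m"
    and dy: "\<And>t. s \<le> t \<Longrightarrow> (y has_real_derivative y' t) (at t)"
    and dy': "\<And>t. s \<le> t \<Longrightarrow> (y' has_real_derivative y'' t) (at t)"
    and F: "\<And>t. s \<le> t \<Longrightarrow> a * y'' t - y' t \<le> m"
    and bounded: "\<And>t. s \<le> t \<Longrightarrow> \<bar>y t\<bar> \<le> M"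
  shows "- m \<le> y' s"
proof (rule ccontr)
  assume "\<not> - m \<le> y' s"
  then have neg: "y' s + m < 0"
    by simp
  have "0 < - y' s"
    using neg m by simp
  moreover have "- y' s \<le> - y' r" if "s \<le> r" for r
  proof -
    have "exp (- r / a) * (y' r + m) \<le> exp (- s / a) * (y' s + m)"
      using first_integral_nonincreasing[OF a that, of y' y'' m] dy' F by simp
    also have "\<dots> \<le> exp (- r / a) * (y' s + m)"
    proof (rule mult_right_mono_neg)
      show "exp (- r / a) \<le> exp (- s / a)"
        using a that by (simp add: divide_right_mono)
    qed (use neg in simp)
    finally show ?thesis
      by simp
  qed
  ultimately show False
    by (rule bounded_imp_not_deriv_ge_pos[where y = "\<lambda>t. - y t" and M = M])
      (use dy bounded in \<open>auto intro: DERIV_minus\<close>)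
qed

lemma second_order_deriv_upper:
  fixes y' y'' :: "real \<Rightarrow> real"
  assumes a: "0 < a" and "0 \<le> \<delta>"
    and dy': "\<And>r. s \<le> r \<Longrightarrow> r \<le> s + \<delta> \<Longrightarrow> (y' has_real_derivative y'' r) (at r)"
    and F: "\<And>r. s \<le> r \<Longrightarrow> r \<le> s + \<delta> \<Longrightarrow> m \<le> a * y'' r - y' r"
    and end_nonpos: "y' (s + \<delta>) \<le> 0"
  shows "y' s \<le> - m * (1 - exp (- \<delta> / a))"
proof -
  have "exp (- s / a) * (y' s + m) \<le> exp (- (s + \<delta>) / a) * (y' (s + \<delta>) + m)"
    using first_integral_nondecreasing[of a s "s + \<delta>" y' y'' m] assms by simp
  also have "\<dots> \<le> exp (- (s + \<delta>) / a) * m"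
    using end_nonpos by (intro mult_left_mono) auto
  also have "\<dots> = exp (- s / a) * (exp (- \<delta> / a) * m)"
    by (simp add: exp_add[symmetric] diff_divide_distrib mult.assoc)
  finally have "y' s + m \<le> exp (- \<delta> / a) * m"
    by simp
  then show ?thesis
    by (simp add: algebra_simps)
qed

text \<open>The deviation \<open>y = \<sigma> (x - K)\<close> of a solution \<open>x\<close> of \<open>a x'' - x' - x + g (x (t - h)) = 0\<close>
  that stays on one side \<open>\<sigma> \<in> {-1, 1}\<close> of \<open>K\<close>, with \<open>G\<close> collecting the nonlinearity.\<close>

locale perturbed_delay_solution =
  fixes a h \<beta> T M :: real and y y' y'' G :: "real \<Rightarrow> real"
  assumes a_pos: "0 < a" and h_pos: "0 < h" and \<beta>_pos: "0 < \<beta>"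
    and dy: "\<And>t. (y has_real_derivative y' t) (at t)"
    and dy': "\<And>t. (y' has_real_derivative y'' t) (at t)"
    and equation: "\<And>t. T \<le> t \<Longrightarrow> a * y'' t - y' t = y t + G t"
    and G_lower: "\<And>t. T \<le> t \<Longrightarrow> \<beta> * y (t - h) \<le> G t"
    and nonneg: "\<And>t. T - h \<le> t \<Longrightarrow> 0 \<le> y t"
    and bounded: "\<And>t. \<bar>y t\<bar> \<le> M"
begin

lemma forcing_nonneg: "T \<le> t \<Longrightarrow> 0 \<le> a * y'' t - y' t"
  using equation[of t] G_lower[of t] nonneg[of t] nonneg[of "t - h"] \<beta>_pos h_pos
  by (smt (verit) zero_le_mult_iff)

lemma deriv_nonpos: "T \<le> t \<Longrightarrow> y' t \<le> 0"
  by (rule bounded_second_order_deriv_nonpos[OF a_pos _ dy dy' forcing_nonneg bounded])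

lemma antimono: "T \<le> s \<Longrightarrow> s \<le> u \<Longrightarrow> y u \<le> y s"
  by (rule DERIV_nonpos_imp_nonincreasing'[OF _ dy deriv_nonpos]) auto

lemma eventually_zero_or_positive: "(\<exists>s. \<forall>t>s. y t = 0) \<or> (\<forall>t\<ge>T. 0 < y t)"
proof (cases "\<exists>s\<ge>T. y s \<le> 0")
  case True
  then obtain s where "T \<le> s" "y s \<le> 0"
    by blast
  then have "y t = 0" if "s < t" for t
    using antimono[of s t] nonneg[of t] that h_pos by simp
  then show ?thesis
    by blast
qed (meson not_le)

end

text \<open>By \<open>delay_ratio\<close>, \<open>(8 / (\<beta> h))\<^sup>2\<close> bounds \<open>y (t - h) / y t\<close>; hence
  \<open>1 / delay_damping a \<beta> B h\<close> bounds \<open>(y - a y') / y\<close>.\<close>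

definition delay_damping :: "real \<Rightarrow> real \<Rightarrow> real \<Rightarrow> real \<Rightarrow> real" where
  "delay_damping a \<beta> B h = 1 / (1 + a * (1 + B * (8 / (\<beta> * h))\<^sup>2))"

locale positive_perturbed_delay_solution = perturbed_delay_solution +
  fixes B :: real
  assumes B_nonneg: "0 \<le> B"
    and G_upper: "\<And>t. T \<le> t \<Longrightarrow> G t \<le> B * y (t - h)"
    and small_a: "4 * a \<le> h"
    and positive: "\<And>t. T \<le> t \<Longrightarrow> 0 < y t"
begin

lemma deriv_upper:
  assumes "T + h \<le> s"
  shows "y' s \<le> - (\<beta> / 2) * y (s - 3 * h / 4)"
proof -
  define m where "m = \<beta> * y (s - 3 * h / 4)"
  have m: "0 \<le> m"
    using nonneg[of "s - 3 * h / 4"] assms \<beta>_pos h_pos by (simp add: m_def)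
  have "m \<le> a * y'' r - y' r" if "s \<le> r" "r \<le> s + h / 4" for r
  proof -
    have "m \<le> \<beta> * y (r - h)"
      using antimono[of "r - h" "s - 3 * h / 4"] that assms \<beta>_pos by (simp add: m_def)
    also have "\<dots> \<le> y r + G r"
      using G_lower[of r] nonneg[of r] that assms h_pos by simp
    finally show ?thesis
      using equation[of r] that assms h_pos by simp
  qed
  then have "y' s \<le> - m * (1 - exp (- (h / 4) / a))"
    using second_order_deriv_upper[OF a_pos, of "h / 4" s y' y'' m] dy' deriv_nonpos[of "s + h / 4"]
      assms h_pos by simp
  moreover have "exp (- (h / 4) / a) \<le> 1 / 2"
  proof -
    have "exp (- (h / 4) / a) \<le> exp (- 1)"
      using small_a a_pos by (simp add: field_simps)
    also have "exp (- 1) \<le> (1 / 2 :: real)"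
      using exp_ge_add_one_self[of 1] by (simp add: exp_minus field_simps)
    finally show ?thesis .
  qed
  then have "m * (1 / 2) \<le> m * (1 - exp (- (h / 4) / a))"
    using m by (intro mult_left_mono) auto
  ultimately show ?thesis
    by (simp add: m_def)
qed

lemma half_delay_ratio:
  assumes "T + h \<le> t"
  shows "\<beta> * h / 8 * y (t - h / 2) \<le> y t"
proof -
  have "y (t + h / 4) + \<beta> / 2 * y (t - h / 2) * (h / 4) \<le> y t"
  proof (rule DERIV_le_neg_const_imp_decrease[OF _ dy])
    fix s assume s: "t \<le> s" "s \<le> t + h / 4"
    have "\<beta> / 2 * y (t - h / 2) \<le> \<beta> / 2 * y (s - 3 * h / 4)"
      using antimono[of "s - 3 * h / 4" "t - h / 2"] s assms \<beta>_pos by simp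
    then show "y' s \<le> - (\<beta> / 2 * y (t - h / 2))"
      using deriv_upper[of s] s assms by simp
  qed (use h_pos in simp)
  moreover have "0 < y (t + h / 4)"
    using positive assms h_pos by simp
  ultimately show ?thesis
    by (simp add: algebra_simps)
qed

lemma delay_ratio:
  assumes "T + 2 * h \<le> t"
  shows "y (t - h) \<le> (8 / (\<beta> * h))\<^sup>2 * y t"
proof -
  define k where "k = \<beta> * h / 8"
  have k: "0 < k"
    using \<beta>_pos h_pos by (simp add: k_def)
  have "k * (k * y (t - h)) \<le> k * y (t - h / 2)"
    using half_delay_ratio[of "t - h / 2"] assms k h_pos by (intro mult_left_mono) (auto simp: k_def)
  also have "\<dots> \<le> y t"
    using half_delay_ratio[of t] assms h_pos by (simp add: k_def)
  finally have "k\<^sup>2 * y (t - h) \<le> y t"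
    by (simp add: power2_eq_square mult.assoc)
  have "(8 / (\<beta> * h))\<^sup>2 * k\<^sup>2 = 1"
    using \<beta>_pos h_pos by (simp add: k_def power_mult_distrib[symmetric])
  then have "y (t - h) = (8 / (\<beta> * h))\<^sup>2 * (k\<^sup>2 * y (t - h))"
    by (simp add: mult.assoc[symmetric])
  also have "\<dots> \<le> (8 / (\<beta> * h))\<^sup>2 * y t"
    using \<open>k\<^sup>2 * y (t - h) \<le> y t\<close> by (rule mult_left_mono) simp
  finally show ?thesis .
qed

lemma deriv_lower:
  assumes "T + 2 * h \<le> t"
  shows "- y' t \<le> (1 + B * (8 / (\<beta> * h))\<^sup>2) * y t"
proof -
  have "- y' t \<le> y t + B * y (t - h)"
  proof -
    have "a * y'' r - y' r \<le> y t + B * y (t - h)" if "t \<le> r" for r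
    proof -
      have "B * y (r - h) \<le> B * y (t - h)"
        using antimono[of "t - h" "r - h"] that assms h_pos B_nonneg by (simp add: mult_left_mono)
      then show ?thesis
        using equation[of r] G_upper[of r] antimono[of t r] that assms h_pos by simp
    qed
    moreover have "0 \<le> y t + B * y (t - h)"
      using nonneg[of t] nonneg[of "t - h"] B_nonneg assms h_pos by simp
    ultimately show ?thesis
      using bounded_second_order_deriv_lower[OF a_pos _ dy dy', of "y t + B * y (t - h)" t M] bounded
      by simp
  qed
  also have "B * y (t - h) \<le> B * ((8 / (\<beta> * h))\<^sup>2 * y t)"
    using delay_ratio[OF assms] B_nonneg by (rule mult_left_mono)
  finally show ?thesis
    by (simp add: algebra_simps)
qed

lemma damped_combination_bounds:
  assumes "T + 2 * h \<le> t"
  shows "y t \<le> y t - a * y' t" "delay_damping a \<beta> B h * (y t - a * y' t) \<le> y t"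
proof -
  show "y t \<le> y t - a * y' t"
    using deriv_nonpos[of t] assms a_pos h_pos by (simp add: mult_nonneg_nonpos)
  define A where "A = 1 + B * (8 / (\<beta> * h))\<^sup>2"
  have "0 < 1 + a * A"
    using a_pos B_nonneg by (simp add: A_def add_pos_nonneg)
  then have \<kappa>: "0 < delay_damping a \<beta> B h" "delay_damping a \<beta> B h * (1 + a * A) = 1"
    by (simp_all add: A_def delay_damping_def)
  have "a * - y' t \<le> a * (A * y t)"
    using deriv_lower[OF assms] a_pos unfolding A_def by (intro mult_left_mono) auto
  then have "delay_damping a \<beta> B h * (y t - a * y' t) \<le> delay_damping a \<beta> B h * ((1 + a * A) * y t)"
    using \<kappa>(1) by (intro mult_left_mono) (auto simp: algebra_simps)
  then show "delay_damping a \<beta> B h * (y t - a * y' t) \<le> y t"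
    by (simp add: \<kappa>(2) mult.assoc[symmetric])
qed

text \<open>Since \<open>W = y - a y'\<close> has \<open>W' = - (y + G)\<close> and lies between \<open>y\<close> and \<open>y / \<kappa>\<close>, the
  function \<open>e\<^sup>\<kappa>\<^sup>t W\<close> satisfies a first-order delay inequality with coefficient \<open>\<kappa> \<beta> e\<^sup>\<kappa>\<^sup>h\<close>.\<close>

lemma delay_damping_bound:
  "delay_damping a \<beta> B h * \<beta> * exp (delay_damping a \<beta> B h * h) * h * exp 1 \<le> 1"
proof -
  define \<kappa> where "\<kappa> = delay_damping a \<beta> B h"
  define W where "W t = y t - a * y' t" for t
  define V where "V t = exp (\<kappa> * t) * W t" for t
  have dV: "(V has_real_derivative exp (\<kappa> * t) * (\<kappa> * W t - y t - G t)) (at t)" if "T \<le> t" for t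
  proof -
    have "(W has_real_derivative y' t - a * y'' t) (at t)"
      unfolding W_def[abs_def] by (auto intro!: derivative_eq_intros dy dy')
    then show ?thesis
      unfolding V_def[abs_def] using equation[OF that]
      by (auto intro!: derivative_eq_intros simp: algebra_simps)
  qed
  have ineq: "exp (\<kappa> * t) * (\<kappa> * W t - y t - G t) \<le> - (\<kappa> * \<beta> * exp (\<kappa> * h)) * V (t - h)"
    if "T + 3 * h \<le> t" for t
  proof -
    have "\<kappa> * W t - y t - G t \<le> - (\<beta> * (\<kappa> * W (t - h)))"
      using damped_combination_bounds(2)[of t] damped_combination_bounds(2)[of "t - h"]
        G_lower[of t] \<beta>_pos that h_pos
      unfolding \<kappa>_def W_def by (smt (verit) mult_left_mono)
    then have "exp (\<kappa> * t) * (\<kappa> * W t - y t - G t) \<le> exp (\<kappa> * t) * - (\<beta> * (\<kappa> * W (t - h)))"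
      by (rule mult_left_mono) simp
    also have "\<dots> = - (\<kappa> * \<beta> * exp (\<kappa> * h)) * V (t - h)"
    proof -
      have "exp (\<kappa> * t) = exp (\<kappa> * h) * exp (\<kappa> * (t - h))"
        by (simp add: exp_add[symmetric] algebra_simps)
      then show ?thesis
        unfolding V_def by (simp only:) (simp add: algebra_simps)
    qed
    finally show ?thesis .
  qed
  have pos: "0 < V t" if "T + 3 * h - h \<le> t" for t
    using damped_combination_bounds(1)[of t] positive[of t] that h_pos by (simp add: V_def W_def)
  have "\<kappa> * \<beta> * exp (\<kappa> * h) * h * exp 1 \<le> 1"
    using h_pos dV ineq pos
    by (intro delay_differential_inequality_positive_solution[where S = "T + 3 * h" and V = V
          and V' = "\<lambda>t. exp (\<kappa> * t) * (\<kappa> * W t - y t - G t)"]) auto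
  then show ?thesis
    by (simp add: \<kappa>_def)
qed

end

lemma DERIV_imp_difference_quotient_bounds:
  fixes g :: "real \<Rightarrow> real"
  assumes "(g has_real_derivative D) (at c)" "b < D" "D < d"
  obtains \<eta> where "0 < \<eta>"
    and "\<And>v. v \<noteq> 0 \<Longrightarrow> \<bar>v\<bar> < \<eta> \<Longrightarrow> b < (g (c + v) - g c) / v \<and> (g (c + v) - g c) / v < d"
proof -
  have "((\<lambda>v. (g (c + v) - g c) / v) \<longlongrightarrow> D) (at 0)"
    using assms(1) by (simp add: DERIV_def)
  then have "\<forall>\<^sub>F v in at 0. b < (g (c + v) - g c) / v \<and> (g (c + v) - g c) / v < d"
    using assms(2,3) by (auto intro: eventually_conj order_tendstoD)
  then show ?thesis
    using that unfolding eventually_at by (auto simp: dist_real_def)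
qed

lemma eventually_small_delay_damping:
  assumes h: "0 < h" and "1 < \<beta> * h * exp (h + 1)"
  shows "\<forall>\<^sub>F a in at_right 0.
    4 * a \<le> h \<and> 1 < delay_damping a \<beta> B h * \<beta> * exp (delay_damping a \<beta> B h * h) * h * exp 1"
proof (rule eventually_conj)
  show "\<forall>\<^sub>F a in at_right 0. 4 * a \<le> h"
    using h unfolding eventually_at_right_field by (intro exI[of _ "h / 4"]) auto
  have "((\<lambda>a. delay_damping a \<beta> B h) \<longlongrightarrow> 1) (at_right 0)"
    unfolding delay_damping_def by (auto intro!: tendsto_eq_intros)
  then have "((\<lambda>a. delay_damping a \<beta> B h * \<beta> * exp (delay_damping a \<beta> B h * h) * h * exp 1)
      \<longlongrightarrow> \<beta> * h * exp (h + 1)) (at_right 0)"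
    by (auto intro!: tendsto_eq_intros simp: exp_add)
  then show "\<forall>\<^sub>F a in at_right 0.
      1 < delay_damping a \<beta> B h * \<beta> * exp (delay_damping a \<beta> B h * h) * h * exp 1"
    using assms(2) by (rule order_tendstoD)
qed

lemma connected_eq_singleton_if_isolated:
  fixes S :: "real set"
  assumes "connected S" "c \<in> S" "0 < \<eta>" and isolated: "\<And>x. x \<in> S \<Longrightarrow> \<bar>x - c\<bar> < \<eta> \<Longrightarrow> x = c"
  shows "S = {c}"
proof -
  have "x = c" if "x \<in> S" for x
  proof (rule ccontr)
    assume "x \<noteq> c"
    define v where "v = (if c < x then c + min (x - c) (\<eta> / 2) else c - min (c - x) (\<eta> / 2))"
    have "v \<in> (if c < x then {c..x} else {x..c})"
      using \<open>x \<noteq> c\<close> \<open>0 < \<eta>\<close> by (auto simp: v_def)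
    then have "v \<in> S"
      using connected_contains_Icc[OF assms(1), of c x] connected_contains_Icc[OF assms(1), of x c]
        \<open>c \<in> S\<close> \<open>x \<in> S\<close>
      by (auto split: if_splits)
    moreover have "\<bar>v - c\<bar> < \<eta>" "v \<noteq> c"
      using \<open>x \<noteq> c\<close> \<open>0 < \<eta>\<close> by (auto simp: v_def)
    ultimately show False
      using isolated by blast
  qed
  then show ?thesis
    using \<open>c \<in> S\<close> by blast
qed

lemma DERIV_eq_zero_if_eventually_const:
  fixes f f' :: "real \<Rightarrow> real"
  assumes "(f has_real_derivative f' t) (at t)" "\<And>r. s < r \<Longrightarrow> f r = c" "s < t"
  shows "f' t = 0"
proof -
  have "(f has_real_derivative 0) (at t)"
    by (rule has_field_derivative_transform_within_open[OF DERIV_const, where S = "{s<..}"])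
      (use assms in auto)
  then show ?thesis
    using assms(1) DERIV_unique by blast
qed

text \<open>If \<open>x = K\<close> on \<open>(s, \<infinity>)\<close>, the equation forces \<open>g (x r) = K\<close> on \<open>(s - h, \<infinity>)\<close>, and the
  connected range of \<open>x\<close> there cannot leave the isolated root \<open>K\<close> of \<open>g c = K\<close>.\<close>

lemma delay_solution_const_backward:
  fixes x x' x'' g :: "real \<Rightarrow> real"
  assumes "0 < h" "0 < \<eta>"
    and isolated: "\<And>c. g c = K \<Longrightarrow> \<bar>c - K\<bar> < \<eta> \<Longrightarrow> c = K"
    and dx: "\<And>t. (x has_real_derivative x' t) (at t)"
    and dx': "\<And>t. (x' has_real_derivative x'' t) (at t)"
    and equation: "\<And>t. a * x'' t - x' t - x t + g (x (t - h)) = 0"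
    and tail: "\<And>t. s < t \<Longrightarrow> x t = K"
    and "s - h < t"
  shows "x t = K"
proof -
  have x': "x' t = 0" if "s < t" for t
    by (rule DERIV_eq_zero_if_eventually_const[where f = x and c = K]) (use dx tail that in auto)
  have x'': "x'' t = 0" if "s < t" for t
    by (rule DERIV_eq_zero_if_eventually_const[where f = x' and c = 0]) (use dx' x' that in auto)
  have g: "g (x r) = K" if "s - h < r" for r
    using equation[of "r + h"] x'[of "r + h"] x''[of "r + h"] tail[of "r + h"] that by simp
  have "continuous_on {s - h<..} x"
    using dx by (intro continuous_at_imp_continuous_on) (auto intro: DERIV_isCont)
  then have "connected (x ` {s - h<..})"
    by (rule connected_continuous_image) simp
  moreover have "K \<in> x ` {s - h<..}"
    using tail[of "s + 1"] \<open>0 < h\<close> by (intro image_eqI[of _ _ "s + 1"]) auto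
  ultimately have "x ` {s - h<..} = {K}"
    using isolated g \<open>0 < \<eta>\<close> by (intro connected_eq_singleton_if_isolated) auto
  then show ?thesis
    using \<open>s - h < t\<close> by auto
qed

lemma delay_solution_eventually_const_imp_const:
  fixes x x' x'' g :: "real \<Rightarrow> real"
  assumes "0 < h" "0 < \<eta>"
    and isolated: "\<And>c. g c = K \<Longrightarrow> \<bar>c - K\<bar> < \<eta> \<Longrightarrow> c = K"
    and dx: "\<And>t. (x has_real_derivative x' t) (at t)"
    and dx': "\<And>t. (x' has_real_derivative x'' t) (at t)"
    and equation: "\<And>t. a * x'' t - x' t - x t + g (x (t - h)) = 0"
    and tail: "\<And>t. s < t \<Longrightarrow> x t = K"
  shows "x t = K"
proof -
  have const: "x t = K" if "s - real n * h < t" for n t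
    using that
  proof (induction n arbitrary: t)
    case 0
    then show ?case
      using tail by simp
  next
    case (Suc n)
    have "s - real n * h - h < t"
      using Suc.prems by (simp add: algebra_simps)
    then show ?case
      using delay_solution_const_backward[where s = "s - real n * h" and x = x and g = g and a = a]
        assms(1-2) isolated dx dx' equation Suc.IH
      by blast
  qed
  obtain n where "(s - t) / h < real n"
    using reals_Archimedean2 by blast
  then show ?thesis
    using const[of n] \<open>0 < h\<close> by (simp add: field_simps)
qed

lemma difference_quotient_bounds_imp_feedback_bounds:
  fixes g :: "real \<Rightarrow> real"
  assumes slope: "\<And>v. v \<noteq> 0 \<Longrightarrow> \<bar>v\<bar> < \<eta> \<Longrightarrow> - B < (g (K + v) - g K) / v \<and> (g (K + v) - g K) / v < - \<beta>"
    and "0 \<le> \<sigma> * v" "\<bar>v\<bar> < \<eta>"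
  shows "\<beta> * (\<sigma> * v) \<le> \<sigma> * (g K - g (K + v)) \<and> \<sigma> * (g K - g (K + v)) \<le> B * (\<sigma> * v)"
proof (cases "v = 0")
  case False
  define q where "q = (g (K + v) - g K) / v"
  have "\<sigma> * (g K - g (K + v)) = - q * (\<sigma> * v)"
    using False by (simp add: q_def field_simps)
  moreover have "\<beta> \<le> - q" "- q \<le> B"
    using slope[OF False \<open>\<bar>v\<bar> < \<eta>\<close>] by (auto simp: q_def)
  note this[THEN mult_right_mono, OF \<open>0 \<le> \<sigma> * v\<close>]
  ultimately show ?thesis
    by simp
qed simp

locale perturbed_delay_equation =
  fixes g :: "real \<Rightarrow> real" and a h K \<beta> B \<eta> :: real and x x' x'' :: "real \<Rightarrow> real"
  assumes h_pos: "0 < h" and a_pos: "0 < a" and \<beta>_pos: "0 < \<beta>" and B_nonneg: "0 \<le> B"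
    and \<eta>_pos: "0 < \<eta>"
    and small_a: "4 * a \<le> h"
    and small_damping: "1 < delay_damping a \<beta> B h * \<beta> * exp (delay_damping a \<beta> B h * h) * h * exp 1"
    and slope: "\<And>v. v \<noteq> 0 \<Longrightarrow> \<bar>v\<bar> < \<eta> \<Longrightarrow>
      - B < (g (K + v) - g K) / v \<and> (g (K + v) - g K) / v < - \<beta>"
    and fixed_point: "g K = K"
    and dx: "\<And>t. (x has_real_derivative x' t) (at t)"
    and dx': "\<And>t. (x' has_real_derivative x'' t) (at t)"
    and equation: "\<And>t. a * x'' t - x' t - x t + g (x (t - h)) = 0"
    and bounded: "bounded (range x)"
    and limit: "(x \<longlongrightarrow> K) at_top"
begin

lemma one_signed_imp_eventually_equilibrium:
  assumes \<sigma>: "\<bar>\<sigma>\<bar> = 1" and one_signed: "\<And>t. z \<le> t \<Longrightarrow> 0 \<le> \<sigma> * (x t - K)"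
  shows "\<exists>s. \<forall>t>s. x t = K"
proof -
  obtain M where M: "\<And>t. \<bar>x t\<bar> \<le> M"
    using bounded unfolding bounded_real by blast
  have "\<forall>\<^sub>F t in at_top. \<bar>x t - K\<bar> < \<eta>"
    using limit \<eta>_pos by (simp add: tendsto_iff dist_real_def)
  then obtain T0 where T0: "\<And>t. T0 \<le> t \<Longrightarrow> \<bar>x t - K\<bar> < \<eta>"
    unfolding eventually_at_top_linorder by blast
  define T where "T = max z T0 + h"
  define y where "y t = \<sigma> * (x t - K)" for t
  define G where "G t = \<sigma> * (g K - g (x (t - h)))" for t
  have G_bounds: "\<beta> * y (t - h) \<le> G t \<and> G t \<le> B * y (t - h)" if "T \<le> t" for t
    using difference_quotient_bounds_imp_feedback_bounds[OF slope, where \<sigma> = \<sigma> and v = "x (t - h) - K"]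
      one_signed[of "t - h"] T0[of "t - h"] that
    by (simp add: y_def G_def T_def)
  interpret perturbed_delay_solution a h \<beta> T "M + \<bar>K\<bar>" y "\<lambda>t. \<sigma> * x' t" "\<lambda>t. \<sigma> * x'' t" G
  proof
    show "(y has_real_derivative \<sigma> * x' t) (at t)" for t
      unfolding y_def by (auto intro!: derivative_eq_intros dx)
    show "((\<lambda>t. \<sigma> * x' t) has_real_derivative \<sigma> * x'' t) (at t)" for t
      by (auto intro!: derivative_eq_intros dx')
    show "a * (\<sigma> * x'' t) - \<sigma> * x' t = y t + G t" for t
    proof -
      have "a * (\<sigma> * x'' t) - \<sigma> * x' t = \<sigma> * (a * x'' t - x' t)"
        by (simp add: algebra_simps)
      also have "a * x'' t - x' t = x t - g (x (t - h))"
        using equation[of t] by simp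
      finally show ?thesis
        by (simp add: y_def G_def fixed_point algebra_simps)
    qed
    show "0 \<le> y t" if "T - h \<le> t" for t
      using one_signed that by (simp add: y_def T_def)
    show "\<bar>y t\<bar> \<le> M + \<bar>K\<bar>" for t
      using M[of t] \<sigma> by (simp add: y_def abs_mult)
  qed (use h_pos a_pos \<beta>_pos G_bounds in auto)
  show ?thesis
    using eventually_zero_or_positive
  proof
    assume "\<exists>s. \<forall>t>s. y t = 0"
    moreover have "\<sigma> \<noteq> 0"
      using \<sigma> by auto
    ultimately show ?thesis
      by (auto simp: y_def)
  next
    assume "\<forall>t\<ge>T. 0 < y t"
    then interpret positive_perturbed_delay_solution a h \<beta> T "M + \<bar>K\<bar>" y
        "\<lambda>t. \<sigma> * x' t" "\<lambda>t. \<sigma> * x'' t" G B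
      using B_nonneg G_bounds small_a by unfold_locales auto
    show ?thesis
      using delay_damping_bound small_damping by linarith
  qed
qed

lemma crosses_equilibrium:
  assumes "\<bar>\<sigma>\<bar> = 1" and nonconstant: "\<not> (\<exists>c. \<forall>t. x t = c)"
  shows "\<exists>t\<ge>z. 0 < \<sigma> * (x t - K)"
proof (rule ccontr)
  assume "\<not> ?thesis"
  then have "0 \<le> - \<sigma> * (x t - K)" if "z \<le> t" for t
    using that by force
  then obtain s where tail: "\<And>t. s < t \<Longrightarrow> x t = K"
    using one_signed_imp_eventually_equilibrium[of "- \<sigma>" z] assms(1) by auto
  have isolated: "c = K" if "g c = K" "\<bar>c - K\<bar> < \<eta>" for c
    using slope[of "c - K"] that fixed_point \<beta>_pos by force
  have "x t = K" for t
    using delay_solution_eventually_const_imp_const[OF h_pos \<eta>_pos isolated dx dx' equation tail] .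
  with nonconstant show False
    by blast
qed

end

theorem lemma16:
  fixes g :: "real \<Rightarrow> real" and h K :: real
  assumes "hypH g h K"
    and "bounded (range g)"
    and "deriv g K * h * exp (h + 1) < -1"
  shows "\<exists>\<epsilon>0>0. \<forall>\<epsilon>. 0 < \<epsilon> \<and> \<epsilon> < \<epsilon>0 \<longrightarrow>
     (\<forall>x :: real \<Rightarrow> real.
        (\<exists>x' x''. \<forall>t. (x has_real_derivative x' t) (at t) \<and>
                      (x' has_real_derivative x'' t) (at t) \<and>
                      \<epsilon>\<^sup>2 * x'' t - x' t - x t + g (x (t - h)) = 0)
        \<and> bounded (range x) \<and> \<not> (\<exists>c. \<forall>t. x t = c) \<and> (x \<longlongrightarrow> K) at_top
        \<longrightarrow> (\<forall>z. (\<exists>t\<ge>z. x t - K > 0) \<and> (\<exists>t\<ge>z. x t - K < 0)))"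
proof -
  define D where "D = deriv g K"
  define H where "H = h * exp (h + 1)"
  have h: "0 < h" and fixed_point: "g K = K" and "(g has_real_derivative D) (at K)"
    using assms(1) by (auto simp: hypH_def D_def set_eq_iff DERIV_deriv_iff_real_differentiable)
  have "0 < H" "D * H < -1"
    using h assms(3) by (simp_all add: H_def D_def mult.assoc)
  then have "1 / H < - D"
    by (simp add: divide_less_eq)
  then obtain \<beta> where "1 / H < \<beta>" "\<beta> < - D"
    using dense by blast
  have "0 < \<beta>"
    using less_trans[OF _ \<open>1 / H < \<beta>\<close>] \<open>0 < H\<close> by simp
  have \<beta>H: "1 < \<beta> * h * exp (h + 1)"
    using \<open>1 / H < \<beta>\<close> \<open>0 < H\<close> by (simp add: H_def divide_less_eq mult.assoc mult.commute)
  define B where "B = 1 - D"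
  have B: "0 \<le> B" "- B < D"
    using \<open>0 < \<beta>\<close> \<open>\<beta> < - D\<close> by (simp_all add: B_def)
  obtain \<eta> where "0 < \<eta>" and slope: "\<And>v. v \<noteq> 0 \<Longrightarrow> \<bar>v\<bar> < \<eta> \<Longrightarrow>
      - B < (g (K + v) - g K) / v \<and> (g (K + v) - g K) / v < - \<beta>"
    using DERIV_imp_difference_quotient_bounds[OF \<open>(g has_real_derivative D) (at K)\<close> B(2), of "- \<beta>"]
      \<open>\<beta> < - D\<close> by auto
  obtain a0 where "0 < a0" and small: "\<And>a. 0 < a \<Longrightarrow> a < a0 \<Longrightarrow> 4 * a \<le> h \<and>
      1 < delay_damping a \<beta> B h * \<beta> * exp (delay_damping a \<beta> B h * h) * h * exp 1"
    using eventually_small_delay_damping[OF h \<beta>H, of B] unfolding eventually_at_right_field by auto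
  show ?thesis
  proof (rule exI[of _ "sqrt a0"], intro conjI allI impI real_sqrt_gt_zero[OF \<open>0 < a0\<close>])
    fix \<epsilon> x z assume "0 < \<epsilon> \<and> \<epsilon> < sqrt a0" and x: "(\<exists>x' x''. \<forall>t. (x has_real_derivative x' t) (at t) \<and>
      (x' has_real_derivative x'' t) (at t) \<and> \<epsilon>\<^sup>2 * x'' t - x' t - x t + g (x (t - h)) = 0)
      \<and> bounded (range x) \<and> \<not> (\<exists>c. \<forall>t. x t = c) \<and> (x \<longlongrightarrow> K) at_top"
    then have "0 < \<epsilon>\<^sup>2" "\<epsilon>\<^sup>2 < a0"
      using real_sqrt_less_iff[of "\<epsilon>\<^sup>2" a0] by auto
    moreover obtain x' x'' where "\<forall>t. (x has_real_derivative x' t) (at t) \<and>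
        (x' has_real_derivative x'' t) (at t) \<and> \<epsilon>\<^sup>2 * x'' t - x' t - x t + g (x (t - h)) = 0"
      using x by blast
    ultimately interpret perturbed_delay_equation g "\<epsilon>\<^sup>2" h K \<beta> B \<eta> x x' x''
      using x h \<open>0 < \<beta>\<close> B(1) \<open>0 < \<eta>\<close> small slope fixed_point by unfold_locales auto
    show "\<exists>t\<ge>z. x t - K > 0"
      using crosses_equilibrium[of 1 z] x by auto
    show "\<exists>t\<ge>z. x t - K < 0"
      using crosses_equilibrium[of "- 1" z] x by auto
  qed
qed

end
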